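(* Let $(X,\mathcal T,P,\leq,\{\sigma_x:x\in X\})$ be a typed topological space with $X$ finite, and let $p\in P$. A set $D\subseteq X$ is $p$-closure connected if and only if for any two points $z,w\in D$ there exists a sequence $z=w_1,w_2,\dots,w_t=w$ with each $w_i\in D$ and $p\vdash tr(\{w_i\})\cap p\vdash tr(\{w_{i+1}\})\neq\emptyset$ for all $i=1,\dots,t-1$.
   Context: A typed topological space $(X,\mathcal T,P,\leq,\{\sigma_x:x\in X\})$ consists of a topological space $(X,\mathcal T)$, a partially ordered set $(P,\leq)$ of types, and for each $x\in X$ a partial function $\sigma_x:\{O\in\mathcal T:x\in O\}\to P$ such that for all $U,V$ in its domain, $\sigma_x(U)\leq\sigma_x(V)$ iff $U\subseteq V$. $U$ is a type-$p$ neighborhood of $x$ if $U$ is in the domain of $\sigma_x$ and $\sigma_x(U)=p$. $x$ is a $p$-accumulation point of $A$ if every type-$p$ neighborhood of $x$ meets $A$. $p\vdash CL_1(A)=A\cup\{p\text{-accumulation points of }A\}$, $p\vdash CL_n(A)=p\vdash CL_1(p\vdash CL_{n-1}(A))$, $p\vdash tr(A)=\bigcup_{n\ge1}p\vdash CL_n(A)$. Two sets $D,D'\subseteq X$ are $p$-closure disjoint if $p\vdash tr(D)\cap p\vdash tr(D')=\emptyset$. A set $D\subseteq X$ is $p$-closure connected if it cannot be partitioned into two non-empty subsets $E,E'$ that are $p$-closure disjoint. *)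

theory Defs
  imports "HOL-Analysis.Analysis"
begin

text \<open>A typed topological space: a topology T on X = topspace T, a partially ordered
type of types 'p, and for each x a partial function sigma x from the open
neighbourhoods of x to 'p (None = undefined) which is an order embedding
on its domain.\<close>

definition typed_top_space :: "'a topology \<Rightarrow> ('a \<Rightarrow> 'a set \<Rightarrow> 'p::order option) \<Rightarrow> bool" where
  "typed_top_space T \<sigma> \<longleftrightarrow>
     (\<forall>x \<in> topspace T. \<forall>U. \<sigma> x U \<noteq> None \<longrightarrow> openin T U \<and> x \<in> U) \<and>
     (\<forall>x \<in> topspace T. \<forall>U V. \<sigma> x U \<noteq> None \<longrightarrow> \<sigma> x V \<noteq> None \<longrightarrow>
        (the (\<sigma> x U) \<le> the (\<sigma> x V) \<longleftrightarrow> U \<subseteq> V))"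

definition type_nbhd :: "('a \<Rightarrow> 'a set \<Rightarrow> 'p option) \<Rightarrow> 'p \<Rightarrow> 'a \<Rightarrow> 'a set \<Rightarrow> bool" where
  "type_nbhd \<sigma> p x U \<longleftrightarrow> \<sigma> x U = Some p"

definition p_acc_point :: "'a topology \<Rightarrow> ('a \<Rightarrow> 'a set \<Rightarrow> 'p option) \<Rightarrow> 'p \<Rightarrow> 'a set \<Rightarrow> 'a \<Rightarrow> bool" where
  "p_acc_point T \<sigma> p A x \<longleftrightarrow> x \<in> topspace T \<and> (\<forall>U. type_nbhd \<sigma> p x U \<longrightarrow> U \<inter> A \<noteq> {})"

definition pCL1 :: "'a topology \<Rightarrow> ('a \<Rightarrow> 'a set \<Rightarrow> 'p option) \<Rightarrow> 'p \<Rightarrow> 'a set \<Rightarrow> 'a set" where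
  "pCL1 T \<sigma> p A = A \<union> {x. p_acc_point T \<sigma> p A x}"

fun pCL :: "'a topology \<Rightarrow> ('a \<Rightarrow> 'a set \<Rightarrow> 'p option) \<Rightarrow> 'p \<Rightarrow> nat \<Rightarrow> 'a set \<Rightarrow> 'a set" where
  "pCL T \<sigma> p 0 A = A"
| "pCL T \<sigma> p (Suc n) A = pCL1 T \<sigma> p (pCL T \<sigma> p n A)"

definition ptr :: "'a topology \<Rightarrow> ('a \<Rightarrow> 'a set \<Rightarrow> 'p option) \<Rightarrow> 'p \<Rightarrow> 'a set \<Rightarrow> 'a set" where
  "ptr T \<sigma> p A = (\<Union>n\<in>{1..}. pCL T \<sigma> p n A)"

definition p_closure_disjoint :: "'a topology \<Rightarrow> ('a \<Rightarrow> 'a set \<Rightarrow> 'p option) \<Rightarrow> 'p \<Rightarrow> 'a set \<Rightarrow> 'a set \<Rightarrow> bool" where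
  "p_closure_disjoint T \<sigma> p D D' \<longleftrightarrow> ptr T \<sigma> p D \<inter> ptr T \<sigma> p D' = {}"

definition p_closure_connected :: "'a topology \<Rightarrow> ('a \<Rightarrow> 'a set \<Rightarrow> 'p option) \<Rightarrow> 'p \<Rightarrow> 'a set \<Rightarrow> bool" where
  "p_closure_connected T \<sigma> p D \<longleftrightarrow>
     \<not> (\<exists>E E'. E \<noteq> {} \<and> E' \<noteq> {} \<and> E \<union> E' = D \<and> E \<inter> E' = {} \<and> p_closure_disjoint T \<sigma> p E E')"

end

theory Submission
  imports Defs
begin

text \<open>Since each \<open>\<sigma> x\<close> is an order embedding, a point has at most one neighbourhood of
type \<open>p\<close>. Hence a point is a \<open>p\<close>-accumulation point of \<open>A \<union> B\<close> only if it is one of \<open>A\<close>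
or of \<open>B\<close>, so \<open>p \<turnstile> tr\<close> commutes with binary unions, and for a finite nonempty set it is
the union of the traces of its points. Two finite sets are therefore \<open>p\<close>-closure
disjoint iff no point of one has a trace meeting the trace of a point of the other,
and \<open>p\<close>-closure connectedness of \<open>D\<close> becomes connectedness of the graph on \<open>D\<close> that
links two points whose traces meet.\<close>

lemma type_nbhd_unique:
  assumes "typed_top_space T \<sigma>" "x \<in> topspace T" "\<sigma> x U = Some p" "\<sigma> x V = Some p"
  shows "U = V"
proof -
  have embedding: "\<And>U V. \<sigma> x U \<noteq> None \<Longrightarrow> \<sigma> x V \<noteq> None \<Longrightarrow>
      (the (\<sigma> x U) \<le> the (\<sigma> x V) \<longleftrightarrow> U \<subseteq> V)"
    using assms(1,2) unfolding typed_top_space_def by blast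
  have "U \<subseteq> V" "V \<subseteq> U"
    using embedding[of U V] embedding[of V U] assms(3,4) by simp_all
  then show ?thesis by blast
qed

lemma pCL1_mono: "A \<subseteq> B \<Longrightarrow> pCL1 T \<sigma> p A \<subseteq> pCL1 T \<sigma> p B"
  unfolding pCL1_def p_acc_point_def by blast

lemma pCL1_Un:
  assumes "typed_top_space T \<sigma>"
  shows "pCL1 T \<sigma> p (A \<union> B) = pCL1 T \<sigma> p A \<union> pCL1 T \<sigma> p B"
proof
  show "pCL1 T \<sigma> p A \<union> pCL1 T \<sigma> p B \<subseteq> pCL1 T \<sigma> p (A \<union> B)"
    by (intro Un_least pCL1_mono) auto
  show "pCL1 T \<sigma> p (A \<union> B) \<subseteq> pCL1 T \<sigma> p A \<union> pCL1 T \<sigma> p B"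
  proof
    fix x assume x: "x \<in> pCL1 T \<sigma> p (A \<union> B)"
    show "x \<in> pCL1 T \<sigma> p A \<union> pCL1 T \<sigma> p B"
    proof (rule ccontr)
      assume none: "x \<notin> pCL1 T \<sigma> p A \<union> pCL1 T \<sigma> p B"
      then have acc: "p_acc_point T \<sigma> p (A \<union> B) x"
        using x unfolding pCL1_def by auto
      then have xT: "x \<in> topspace T"
        unfolding p_acc_point_def by auto
      from none xT obtain U where U: "\<sigma> x U = Some p" "U \<inter> A = {}"
        unfolding pCL1_def p_acc_point_def type_nbhd_def by auto
      from none xT obtain V where V: "\<sigma> x V = Some p" "V \<inter> B = {}"
        unfolding pCL1_def p_acc_point_def type_nbhd_def by auto
      have "U = V"
        using type_nbhd_unique[OF assms xT U(1) V(1)] .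
      then show False
        using acc U V unfolding p_acc_point_def type_nbhd_def by auto
    qed
  qed
qed

lemma pCL_Un:
  assumes "typed_top_space T \<sigma>"
  shows "pCL T \<sigma> p n (A \<union> B) = pCL T \<sigma> p n A \<union> pCL T \<sigma> p n B"
  by (induction n) (simp_all add: pCL1_Un[OF assms])

lemma ptr_Un:
  assumes "typed_top_space T \<sigma>"
  shows "ptr T \<sigma> p (A \<union> B) = ptr T \<sigma> p A \<union> ptr T \<sigma> p B"
  unfolding ptr_def pCL_Un[OF assms] by blast

text \<open>Nonemptiness matters: \<open>ptr T \<sigma> p {}\<close> contains every point without a neighbourhood of
type \<open>p\<close>.\<close>

lemma ptr_eq_UN_singletons:
  assumes "typed_top_space T \<sigma>" "finite E" "E \<noteq> {}"
  shows "ptr T \<sigma> p E = (\<Union>e\<in>E. ptr T \<sigma> p {e})"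
  using assms(2,3)
proof (induction E rule: finite_ne_induct)
  case (singleton x)
  then show ?case by simp
next
  case (insert x F)
  have "ptr T \<sigma> p (insert x F) = ptr T \<sigma> p {x} \<union> ptr T \<sigma> p F"
    using ptr_Un[OF assms(1), where A="{x}" and B=F] by simp
  with insert.IH show ?case by simp
qed

lemma p_closure_disjoint_iff_singletons:
  assumes "typed_top_space T \<sigma>" "finite E" "E \<noteq> {}" "finite E'" "E' \<noteq> {}"
  shows "p_closure_disjoint T \<sigma> p E E' \<longleftrightarrow>
    (\<forall>x\<in>E. \<forall>y\<in>E'. ptr T \<sigma> p {x} \<inter> ptr T \<sigma> p {y} = {})"
  unfolding p_closure_disjoint_def ptr_eq_UN_singletons[OF assms(1-3)]
    ptr_eq_UN_singletons[OF assms(1,4,5)]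
  by blast

lemma p_closure_connected_iff_unsplittable:
  assumes "typed_top_space T \<sigma>" "finite D"
  shows "p_closure_connected T \<sigma> p D \<longleftrightarrow>
    (\<forall>E E'. E \<noteq> {} \<longrightarrow> E' \<noteq> {} \<longrightarrow> E \<union> E' = D \<longrightarrow> E \<inter> E' = {} \<longrightarrow>
       (\<exists>x\<in>E. \<exists>y\<in>E'. ptr T \<sigma> p {x} \<inter> ptr T \<sigma> p {y} \<noteq> {}))"
proof -
  have disjoint_iff: "p_closure_disjoint T \<sigma> p E E' \<longleftrightarrow>
      \<not> (\<exists>x\<in>E. \<exists>y\<in>E'. ptr T \<sigma> p {x} \<inter> ptr T \<sigma> p {y} \<noteq> {})"
    if "E \<noteq> {}" "E' \<noteq> {}" "E \<union> E' = D" for E E'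
  proof -
    have "finite E" "finite E'"
      using assms(2) that(3) by auto
    with p_closure_disjoint_iff_singletons[OF assms(1)] that(1,2) show ?thesis
      by simp
  qed
  have "(E \<noteq> {} \<and> E' \<noteq> {} \<and> E \<union> E' = D \<and> E \<inter> E' = {} \<and> p_closure_disjoint T \<sigma> p E E') \<longleftrightarrow>
      \<not> (E \<noteq> {} \<longrightarrow> E' \<noteq> {} \<longrightarrow> E \<union> E' = D \<longrightarrow> E \<inter> E' = {} \<longrightarrow>
          (\<exists>x\<in>E. \<exists>y\<in>E'. ptr T \<sigma> p {x} \<inter> ptr T \<sigma> p {y} \<noteq> {}))" for E E'
    using disjoint_iff[of E E'] by argo
  then show ?thesis
    unfolding p_closure_connected_def by (simp only: not_ex not_not)
qed

definition walk_in :: "'a set \<Rightarrow> ('a \<Rightarrow> 'a \<Rightarrow> bool) \<Rightarrow> 'a \<Rightarrow> 'a \<Rightarrow> bool" where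
  "walk_in D R z w \<longleftrightarrow> (\<exists>ws. ws \<noteq> [] \<and> hd ws = z \<and> last ws = w \<and> set ws \<subseteq> D \<and>
     (\<forall>i. Suc i < length ws \<longrightarrow> R (ws ! i) (ws ! Suc i)))"

lemma walk_in_refl: "z \<in> D \<Longrightarrow> walk_in D R z z"
  unfolding walk_in_def by (intro exI[of _ "[z]"]) simp

lemma walk_in_snoc:
  assumes "walk_in D R z x" "y \<in> D" "R x y"
  shows "walk_in D R z y"
proof -
  obtain ws where ws: "ws \<noteq> []" "hd ws = z" "last ws = x" "set ws \<subseteq> D"
    and steps: "\<forall>i. Suc i < length ws \<longrightarrow> R (ws ! i) (ws ! Suc i)"
    using assms(1) unfolding walk_in_def by blast
  have "R ((ws @ [y]) ! i) ((ws @ [y]) ! Suc i)" if "Suc i < length (ws @ [y])" for i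
  proof (cases "Suc i < length ws")
    case True
    then show ?thesis using steps by (simp add: nth_append)
  next
    case False
    with that have "i = length ws - 1" by simp
    then show ?thesis
      using ws(1,3) assms(3) by (simp add: nth_append last_conv_nth)
  qed
  then show ?thesis
    unfolding walk_in_def using ws assms(2) by (intro exI[of _ "ws @ [y]"]) auto
qed

lemma list_leaves_set:
  "ws \<noteq> [] \<Longrightarrow> hd ws \<in> E \<Longrightarrow> last ws \<notin> E \<Longrightarrow>
   \<exists>i. Suc i < length ws \<and> ws ! i \<in> E \<and> ws ! Suc i \<notin> E"
proof (induction ws)
  case Nil
  then show ?case by simp
next
  case (Cons a ws)
  then have "ws \<noteq> []" by auto
  show ?case
  proof (cases "hd ws \<in> E")
    case False
    then show ?thesis
      using Cons.prems \<open>ws \<noteq> []\<close> by (intro exI[of _ 0]) (simp add: hd_conv_nth)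
  next
    case True
    then obtain i where "Suc i < length ws" "ws ! i \<in> E" "ws ! Suc i \<notin> E"
      using Cons.IH Cons.prems \<open>ws \<noteq> []\<close> by auto
    then show ?thesis by (intro exI[of _ "Suc i"]) simp
  qed
qed

lemma walk_in_leaves_set:
  assumes "walk_in D R z w" "z \<in> E" "w \<notin> E"
  shows "\<exists>x\<in>E. \<exists>y\<in>D - E. R x y"
proof -
  obtain ws where ws: "ws \<noteq> []" "hd ws = z" "last ws = w" "set ws \<subseteq> D"
    and steps: "\<forall>i. Suc i < length ws \<longrightarrow> R (ws ! i) (ws ! Suc i)"
    using assms(1) unfolding walk_in_def by blast
  obtain i where i: "Suc i < length ws" "ws ! i \<in> E" "ws ! Suc i \<notin> E"
    using list_leaves_set[of ws E] ws assms(2,3) by auto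
  have "ws ! Suc i \<in> D"
    using nth_mem[OF i(1)] ws(4) by blast
  then show ?thesis
    using i steps by blast
qed

lemma unsplittable_iff_walks:
  "(\<forall>E E'. E \<noteq> {} \<longrightarrow> E' \<noteq> {} \<longrightarrow> E \<union> E' = D \<longrightarrow> E \<inter> E' = {} \<longrightarrow> (\<exists>x\<in>E. \<exists>y\<in>E'. R x y))
   \<longleftrightarrow> (\<forall>z\<in>D. \<forall>w\<in>D. walk_in D R z w)"
  (is "?unsplittable \<longleftrightarrow> ?walks")
proof
  assume split: ?unsplittable
  show ?walks
  proof (intro ballI)
    fix z w assume "z \<in> D" "w \<in> D"
    define E where "E = {v \<in> D. walk_in D R z v}"
    have "z \<in> E"
      using \<open>z \<in> D\<close> walk_in_refl[of z D R] unfolding E_def by blast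
    have "E \<subseteq> D"
      unfolding E_def by blast
    have "D - E = {}"
    proof (rule ccontr)
      assume "D - E \<noteq> {}"
      moreover have "E \<noteq> {}" "E \<union> (D - E) = D" "E \<inter> (D - E) = {}"
        using \<open>z \<in> E\<close> \<open>E \<subseteq> D\<close> by blast+
      ultimately obtain x y where "x \<in> E" "y \<in> D - E" "R x y"
        using split[rule_format, of E "D - E"] by blast
      then have "walk_in D R z y"
        using walk_in_snoc[of D R z x y] unfolding E_def by blast
      with \<open>y \<in> D - E\<close> show False
        unfolding E_def by blast
    qed
    with \<open>w \<in> D\<close> show "walk_in D R z w"
      unfolding E_def by blast
  qed
next
  assume walks: ?walks
  show ?unsplittable
  proof (intro allI impI)
    fix E E' assume "E \<noteq> {}" "E' \<noteq> {}" "E \<union> E' = D" "E \<inter> E' = {}"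
    then obtain z w where "z \<in> E" "w \<in> E'" "w \<notin> E" by blast
    with walks \<open>E \<union> E' = D\<close> have "walk_in D R z w" by blast
    then obtain x y where "x \<in> E" "y \<in> D - E" "R x y"
      using walk_in_leaves_set[of D R z w E] \<open>z \<in> E\<close> \<open>w \<notin> E\<close> by blast
    moreover have "y \<in> E'"
      using \<open>y \<in> D - E\<close> \<open>E \<union> E' = D\<close> by blast
    ultimately show "\<exists>x\<in>E. \<exists>y\<in>E'. R x y" by blast
  qed
qed

theorem lemma3p7:
  fixes T :: "'a topology" and \<sigma> :: "'a \<Rightarrow> 'a set \<Rightarrow> 'p::order option"
    and p :: 'p and D :: "'a set"
  assumes "typed_top_space T \<sigma>"
    and "finite (topspace T)"
    and "D \<subseteq> topspace T"
  shows "p_closure_connected T \<sigma> p D \<longleftrightarrow>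
    (\<forall>z\<in>D. \<forall>w\<in>D. \<exists>ws. ws \<noteq> [] \<and> hd ws = z \<and> last ws = w \<and> set ws \<subseteq> D \<and>
       (\<forall>i. Suc i < length ws \<longrightarrow>
          ptr T \<sigma> p {ws ! i} \<inter> ptr T \<sigma> p {ws ! Suc i} \<noteq> {}))"
proof -
  let ?meet = "\<lambda>x y. ptr T \<sigma> p {x} \<inter> ptr T \<sigma> p {y} \<noteq> {}"
  have "finite D"
    using assms(2,3) finite_subset by blast
  then have "p_closure_connected T \<sigma> p D \<longleftrightarrow>
    (\<forall>E E'. E \<noteq> {} \<longrightarrow> E' \<noteq> {} \<longrightarrow> E \<union> E' = D \<longrightarrow> E \<inter> E' = {} \<longrightarrow>
       (\<exists>x\<in>E. \<exists>y\<in>E'. ?meet x y))"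
    by (rule p_closure_connected_iff_unsplittable[OF assms(1)])
  also have "\<dots> \<longleftrightarrow> (\<forall>z\<in>D. \<forall>w\<in>D. walk_in D ?meet z w)"
    by (rule unsplittable_iff_walks)
  finally show ?thesis
    unfolding walk_in_def .
qed

end
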